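(* Let $N=(P_N,T_N,F_N,I_N,O_N)$ and $M=(P_M,T_M,F_M,I_M,O_M)$ be pWF nets with disjoint node sets, both sub-sound. Then for every place $p\in P_N$, the net $N\otimes_p M$ is sub-sound.
   Context: Petri nets and markings. A Petri net is a triple $(P,T,F)$ with $P$ a finite set of places, $T$ a finite set of transitions, $P\cap T=\emptyset$, and $F\subseteq (P\times T)\cup(T\times P)$. For a node $x$, $\bullet x=\{y\mid (y,x)\in F\}$, $x\bullet=\{y\mid (x,y)\in F\}$. A marking is a multiset over $P$ (a function $P\to\mathbb N$); sets of places are identified with bags of multiplicity one, $+,-,\le$ are pointwise, and $k.m$ is the sum of $k$ copies of $m$. Transition $t$ is enabled at $m$ iff $\bullet t\le m$, firing gives $m-\bullet t+t\bullet$, and $m\xrightarrow{*}m'$ denotes reachability by a finite (possibly empty) firing sequence. A pWF net is $(P,T,F,I,O)$ with $(P,T,F)$ a Petri net, $I,O\subseteq P$ non-empty (input/output places), every node reachable by a directed path from some node of $I$, and some node of $O$ reachable from every node; input places may have incoming edges and output places outgoing edges. Sub-soundness. A pWF net is sub-sound if for all integers $k\ge k'\ge 0$ and every marking $m'$: if $k.I\xrightarrow{*}m'+k'.O$ then $m'\xrightarrow{*}(k-k').O$. Place substitution. For WF nets $N=(P,T,F,I,O)$ and a pWF net $M=(P',T',F',I',O')$ with disjoint node sets and $p\in P$, $N\otimes_p M$ is obtained from $N$ by deleting $p$ and all edges incident to $p$, adding all nodes and edges of $M$, adding an edge $(t,p')$ for each $t\in\bullet_N p$ and $p'\in I'$,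 and an edge $(p',t)$ for each $p'\in O'$ and $t\in p\bullet_N$; its input set is $(I\setminus\{p\})\cup I'$ if $p\in I$ and $I$ otherwise, and its output set is $(O\setminus\{p\})\cup O'$ if $p\in O$ and $O$ otherwise. *)

theory Defs
  imports Main "HOL-Library.Multiset"
begin

text \<open>Petri nets with input and output places (pWF candidates).
  Places and transitions live in a common node type 'a, so that
  disjointness of node sets of two nets can be stated.\<close>

record 'a pnet =
  places :: "'a set"
  trans  :: "'a set"
  flow   :: "('a \<times> 'a) set"
  inp    :: "'a set"
  outp   :: "'a set"

definition nodes :: "'a pnet \<Rightarrow> 'a set" where
  "nodes N = places N \<union> trans N"

definition preset :: "'a pnet \<Rightarrow> 'a \<Rightarrow> 'a set" where
  "preset N x = {y. (y, x) \<in> flow N}"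

definition postset :: "'a pnet \<Rightarrow> 'a \<Rightarrow> 'a set" where
  "postset N x = {y. (x, y) \<in> flow N}"

definition petri_net :: "'a pnet \<Rightarrow> bool" where
  "petri_net N \<longleftrightarrow> finite (places N) \<and> finite (trans N) \<and>
     places N \<inter> trans N = {} \<and>
     flow N \<subseteq> (places N \<times> trans N) \<union> (trans N \<times> places N)"

definition pWF_net :: "'a pnet \<Rightarrow> bool" where
  "pWF_net N \<longleftrightarrow> petri_net N \<and>
     inp N \<subseteq> places N \<and> outp N \<subseteq> places N \<and>
     inp N \<noteq> {} \<and> outp N \<noteq> {} \<and>
     (\<forall>x \<in> nodes N. \<exists>i \<in> inp N. (i, x) \<in> (flow N)\<^sup>*) \<and>
     (\<forall>x \<in> nodes N. \<exists>q \<in> outp N. (x, q) \<in> (flow N)\<^sup>*)"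

text \<open>Markings are multisets of places; a set is identified with the
  multiset of multiplicity one (mset_set).\<close>

definition marking :: "'a pnet \<Rightarrow> 'a multiset \<Rightarrow> bool" where
  "marking N m \<longleftrightarrow> set_mset m \<subseteq> places N"

definition fire :: "'a pnet \<Rightarrow> 'a multiset \<Rightarrow> 'a multiset \<Rightarrow> bool" where
  "fire N m m' \<longleftrightarrow> (\<exists>t \<in> trans N. mset_set (preset N t) \<subseteq># m \<and>
       m' = m - mset_set (preset N t) + mset_set (postset N t))"

definition reach :: "'a pnet \<Rightarrow> 'a multiset \<Rightarrow> 'a multiset \<Rightarrow> bool" where
  "reach N = (fire N)\<^sup>*\<^sup>*"

definition sub_sound :: "'a pnet \<Rightarrow> bool" where
  "sub_sound N \<longleftrightarrow> (\<forall>k k' :: nat. \<forall>m'. k \<ge> k' \<and> marking N m' \<longrightarrow>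
     reach N (repeat_mset k (mset_set (inp N))) (m' + repeat_mset k' (mset_set (outp N))) \<longrightarrow>
     reach N m' (repeat_mset (k - k') (mset_set (outp N))))"

definition place_subst :: "'a pnet \<Rightarrow> 'a \<Rightarrow> 'a pnet \<Rightarrow> 'a pnet" where
  "place_subst N p M =
    \<lparr> places = (places N - {p}) \<union> places M,
      trans = trans N \<union> trans M,
      flow = {(x, y). (x, y) \<in> flow N \<and> x \<noteq> p \<and> y \<noteq> p} \<union> flow M
             \<union> {(t, q). t \<in> preset N p \<and> q \<in> inp M}
             \<union> {(q, t). q \<in> outp M \<and> t \<in> postset N p},
      inp = (if p \<in> inp N then (inp N - {p}) \<union> inp M else inp N),
      outp = (if p \<in> outp N then (outp N - {p}) \<union> outp M else outp N) \<rparr>"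

end

theory Submission
  imports Defs
begin

(* Write C = N \<otimes>_p M.  The proof relates runs of C to runs of N and M.
   1. General facts on firing: firing is monotone under adding tokens, and a
      net can be simulated by another one along a marking translation.
   2. Two consequences of sub-soundness of a pWF net M: M moves I to O, and
      no run from j.I ever shows more than j copies of O (because leftover
      tokens can never disappear in a pWF net).
   3. Simulations between C and its parts: a token on p in N is simulated in C by a copy of M
      running from I_M to O_M ("lifting"), so runs of N lift to runs of C.
      Conversely every marking m reachable in C from k.I_C decomposes: its
      N-part, with j - l extra tokens on p, is reachable in N from k.I_N, and
      its M-part, plus l.O_M, is reachable in M from j.I_M (j instances of M
      were started, l of them have been consumed by N).
   4. From such a decomposition of m' + k'.O_C, sub-soundness of M empties
      the M-part of m', sub-soundness of N finishes the N-part, and lifting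
      glues the two runs into a run of C from m' to (k - k').O_C. *)

section \<open>Firing in arbitrary nets\<close>

lemma fire_frame:
  assumes "fire X u v"
  shows "fire X (u + w) (v + w)"
proof -
  obtain t where t: "t \<in> trans X" "mset_set (preset X t) \<subseteq># u"
    "v = u - mset_set (preset X t) + mset_set (postset X t)"
    using assms unfolding fire_def by blast
  have "mset_set (preset X t) \<subseteq># u + w"
    using t(2) by (simp add: subset_mset.add_increasing2)
  moreover have "v + w = u + w - mset_set (preset X t) + mset_set (postset X t)"
    using t(3) subset_mset.diff_add_assoc2[OF t(2), of w] by (simp add: ac_simps)
  ultimately show ?thesis using t(1) unfolding fire_def by blast
qed

lemma reach_frame: "reach X u v \<Longrightarrow> reach X (u + w) (v + w)"
  unfolding reach_def by (induction rule: rtranclp_induct) (auto dest: fire_frame[of X _ _ w])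

lemma reach_trans: "reach X u v \<Longrightarrow> reach X v w \<Longrightarrow> reach X u w"
  unfolding reach_def by simp

lemma reach_simulation:
  assumes "\<And>u v. fire X u v \<Longrightarrow> reach Y (f u) (f v)"
    and "reach X u v"
  shows "reach Y (f u) (f v)"
  using assms(2) unfolding reach_def[of X]
  by (induction rule: rtranclp_induct) (auto simp: reach_def dest: assms(1))

section \<open>Sub-sound pWF nets\<close>

lemma in_mset_setD: "x \<in># mset_set A \<Longrightarrow> x \<in> A"
  by (cases "finite A") auto

lemma in_repeat_msetD: "x \<in># repeat_mset n A \<Longrightarrow> x \<in># A"
  by (metis count_repeat_mset count_eq_zero_iff mult_0_right)

text \<open>In a pWF net every transition has an output place, since some output
  place of the net is reachable from it.\<close>

lemma pWF_postset_nonempty: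
  assumes X: "pWF_net X" and t: "t \<in> trans X"
  shows "mset_set (postset X t) \<noteq> {#}"
proof -
  have "t \<in> nodes X" using t unfolding nodes_def by simp
  then obtain q where q: "q \<in> outp X" "(t, q) \<in> (flow X)\<^sup>*"
    using X unfolding pWF_net_def by blast
  have "t \<noteq> q" using q(1) t X unfolding pWF_net_def petri_net_def by auto
  then obtain y where "(t, y) \<in> flow X" using q(2) by (meson converse_rtranclE)
  then have "y \<in> postset X t" unfolding postset_def by simp
  moreover have "postset X t \<subseteq> places X"
    using X t unfolding pWF_net_def petri_net_def postset_def by blast
  then have "finite (postset X t)"
    using X unfolding pWF_net_def petri_net_def by (auto intro: finite_subset)
  ultimately show ?thesis by (auto simp: mset_set_empty_iff)
qed

lemma pWF_reach_nonempty:
  assumes "pWF_net X" and "reach X u v" and "u \<noteq> {#}"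
  shows "v \<noteq> {#}"
  using assms(2,3) unfolding reach_def
proof (induction rule: rtranclp_induct)
  case (step y z)
  then obtain t where "t \<in> trans X" "z = y - mset_set (preset X t) + mset_set (postset X t)"
    unfolding fire_def by blast
  then show ?case using pWF_postset_nonempty[OF assms(1)] by simp
qed simp

lemma sub_sound_output_bound:
  assumes X: "pWF_net X" and sX: "sub_sound X" and x: "marking X x"
    and r: "reach X (repeat_mset j (mset_set (inp X))) (x + repeat_mset L (mset_set (outp X)))"
  shows "L \<le> j"
proof (rule ccontr)
  assume "\<not> L \<le> j"
  have fin: "finite (outp X)" and out: "outp X \<subseteq> places X" "outp X \<noteq> {}"
    using X unfolding pWF_net_def petri_net_def by (auto intro: finite_subset)
  define m' where "m' = x + repeat_mset (L - j) (mset_set (outp X))"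
  have "x + repeat_mset L (mset_set (outp X)) = m' + repeat_mset j (mset_set (outp X))"
    using \<open>\<not> L \<le> j\<close> unfolding m'_def by (simp add: repeat_mset_distrib[symmetric] add.assoc)
  moreover have "marking X m'"
    using x out(1) fin unfolding m'_def marking_def by (auto dest!: in_repeat_msetD in_mset_setD)
  ultimately have "reach X m' (repeat_mset (j - j) (mset_set (outp X)))"
    using sX r unfolding sub_sound_def by (metis order_refl)
  then have "reach X m' {#}" by simp
  moreover have "m' \<noteq> {#}"
    using \<open>\<not> L \<le> j\<close> out(2) fin unfolding m'_def
    by (auto simp: repeat_mset_eq_empty_iff mset_set_empty_iff)
  ultimately show False using pWF_reach_nonempty[OF X] by blast
qed

text \<open>A sub-sound net moves one token on each input place to one token on
  each output place (the case k = 1, k' = 0).\<close>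

lemma sub_sound_inp_to_outp:
  assumes X: "pWF_net X" and sX: "sub_sound X"
  shows "reach X (mset_set (inp X)) (mset_set (outp X))"
proof -
  have "marking X (mset_set (inp X))"
    using X unfolding pWF_net_def marking_def by (auto dest!: in_mset_setD)
  moreover have "reach X (repeat_mset 1 (mset_set (inp X)))
      (mset_set (inp X) + repeat_mset 0 (mset_set (outp X)))"
    unfolding reach_def by simp
  ultimately have "reach X (mset_set (inp X)) (repeat_mset (1 - 0) (mset_set (outp X)))"
    using sX unfolding sub_sound_def by (metis zero_le_one)
  then show ?thesis by simp
qed

section \<open>The substituted net\<close>

text \<open>The setting of the theorem; sub-soundness of N is only needed in the
  final step and is assumed there.\<close>

locale place_substitution =
  fixes N M :: "'a pnet" and p :: 'a
  assumes wN: "pWF_net N" and wM: "pWF_net M" and dis: "nodes N \<inter> nodes M = {}"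
    and sM: "sub_sound M" and pP: "p \<in> places N"
begin

abbreviation C :: "'a pnet" where "C \<equiv> place_subst N p M"

lemma finPN: "finite (places N)" and finPM: "finite (places M)"
  and dN: "places N \<inter> trans N = {}" and dM: "places M \<inter> trans M = {}"
  and fN: "flow N \<subseteq> (places N \<times> trans N) \<union> (trans N \<times> places N)"
  and fM: "flow M \<subseteq> (places M \<times> trans M) \<union> (trans M \<times> places M)"
  and iN: "inp N \<subseteq> places N" and oN: "outp N \<subseteq> places N"
  and iM: "inp M \<subseteq> places M" and oM: "outp M \<subseteq> places M"
  using wN wM unfolding pWF_net_def petri_net_def by auto

lemma disPP: "places N \<inter> places M = {}" and disTT: "trans N \<inter> trans M = {}"
  and disPT: "places N \<inter> trans M = {}" and disTP: "trans N \<inter> places M = {}"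
  using dis unfolding nodes_def by auto

lemma preN_sub: "t \<in> trans N \<Longrightarrow> preset N t \<subseteq> places N"
  and postN_sub: "t \<in> trans N \<Longrightarrow> postset N t \<subseteq> places N"
  and preM_sub: "t \<in> trans M \<Longrightarrow> preset M t \<subseteq> places M"
  and postM_sub: "t \<in> trans M \<Longrightarrow> postset M t \<subseteq> places M"
  using fN dN fM dM unfolding preset_def postset_def by auto

text \<open>Replacing p in a set S of places of N by a set S' of places of M.
  This describes the presets, postsets, inputs and outputs of C.\<close>

definition subst_p :: "'a set \<Rightarrow> 'a set \<Rightarrow> 'a set" where
  "subst_p S S' = (S - {p}) \<union> (if p \<in> S then S' else {})"

lemma transC: "trans C = trans N \<union> trans M"
  unfolding place_subst_def by simp

lemma inpC: "inp C = subst_p (inp N) (inp M)"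
  and outpC: "outp C = subst_p (outp N) (outp M)"
  unfolding place_subst_def subst_p_def by auto

lemma presetC_N: "t \<in> trans N \<Longrightarrow> preset C t = subst_p (preset N t) (outp M)"
  and postsetC_N: "t \<in> trans N \<Longrightarrow> postset C t = subst_p (postset N t) (inp M)"
  using fM disTP disTT iM oM pP dN
  unfolding place_subst_def preset_def postset_def subst_p_def by auto

lemma presetC_M: "t \<in> trans M \<Longrightarrow> preset C t = preset M t"
  and postsetC_M: "t \<in> trans M \<Longrightarrow> postset C t = postset M t"
  using fN disPT disTT iM oM dM unfolding place_subst_def preset_def postset_def by auto

lemma mset_set_split_p:
  "finite S \<Longrightarrow> mset_set S = mset_set (S - {p}) + (if p \<in> S then {#p#} else {#})"
  by (auto simp: mset_set.remove)

lemma mset_subst_p: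
  assumes "S \<subseteq> places N" and "S' \<subseteq> places M"
  shows "mset_set (subst_p S S') = mset_set (S - {p}) + (if p \<in> S then mset_set S' else {#})"
proof -
  have "finite (S - {p})" "finite S'"
    using assms finPN finPM by (auto intro: finite_subset)
  moreover have "(S - {p}) \<inter> S' = {}" using assms disPP by blast
  ultimately show ?thesis unfolding subst_p_def by (simp add: mset_set_Union)
qed

lemma reach_M_in_C: "reach M u v \<Longrightarrow> reach C u v"
proof (rule reach_simulation[where f = id, simplified])
  fix u v assume "fire M u v"
  then obtain t where "t \<in> trans M" "mset_set (preset M t) \<subseteq># u"
    "v = u - mset_set (preset M t) + mset_set (postset M t)"
    unfolding fire_def by blast
  then have "fire C u v"
    unfolding fire_def using presetC_M postsetC_M transC by (metis UnI2)
  then show "reach C u v" unfolding reach_def by simp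
qed

subsection \<open>Lifting runs of N to runs of C\<close>

definition lift :: "'a multiset \<Rightarrow> 'a multiset" where
  "lift x = filter_mset (\<lambda>q. q \<noteq> p) x + repeat_mset (count x p) (mset_set (outp M))"

lemma lift_plus: "lift (x + y) = lift x + lift y"
  unfolding lift_def by (simp add: repeat_mset_distrib)

lemma lift_repeat: "lift (repeat_mset n x) = repeat_mset n (lift x)"
  by (induction n) (auto simp: lift_plus lift_def)

lemma lift_no_p: "p \<notin># x \<Longrightarrow> lift x = x"
  unfolding lift_def by (simp add: filter_mset_eq_conv count_eq_zero_iff[symmetric])
    (metis count_eq_zero_iff)

lemma lift_p: "lift (replicate_mset c p) = repeat_mset c (mset_set (outp M))"
  unfolding lift_def by (simp add: filter_mset_eq_conv)

lemma lift_mset_set: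
  assumes "S \<subseteq> places N"
  shows "lift (mset_set S) = mset_set (subst_p S (outp M))"
proof -
  have "finite S" using assms finPN by (rule finite_subset)
  moreover have "p \<notin># mset_set (S - {p})" by (auto dest: in_mset_setD)
  ultimately show ?thesis
    using mset_subst_p[OF assms oM] lift_p[of 1] lift_p[of 0]
    by (subst mset_set_split_p) (auto simp: lift_plus lift_no_p)
qed

text \<open>A firing of t in N is simulated by firing t in C followed, if t puts a
  token on p, by a run of M from I_M to O_M.\<close>

lemma fire_N_lift:
  assumes "fire N x y"
  shows "reach C (lift x) (lift y)"
proof -
  obtain t where t: "t \<in> trans N" "mset_set (preset N t) \<subseteq># x"
    "y = x - mset_set (preset N t) + mset_set (postset N t)"
    using assms unfolding fire_def by blast
  define r where "r = x - mset_set (preset N t)"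
  define B where "B = mset_set (postset N t - {p})"
  have x: "lift x = lift r + mset_set (preset C t)"
    using t(2) lift_plus lift_mset_set[OF preN_sub[OF t(1)]] presetC_N[OF t(1)]
    unfolding r_def by (metis subset_mset.diff_add)
  have post: "mset_set (postset C t) = B + (if p \<in> postset N t then mset_set (inp M) else {#})"
    using mset_subst_p[OF postN_sub[OF t(1)] iM] postsetC_N[OF t(1)] unfolding B_def by simp
  have y: "lift y = lift r + B + (if p \<in> postset N t then mset_set (outp M) else {#})"
    using t(3) lift_plus lift_mset_set[OF postN_sub[OF t(1)]] mset_subst_p[OF postN_sub[OF t(1)] oM]
    unfolding r_def B_def by (simp add: add.assoc)
  have "fire C (lift x) (lift r + mset_set (postset C t))"
    unfolding fire_def using t(1) transC x by (intro bexI[of _ t]) auto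
  moreover have "reach C (lift r + B + (if p \<in> postset N t then mset_set (inp M) else {#}))
      (lift r + B + (if p \<in> postset N t then mset_set (outp M) else {#}))"
    using reach_M_in_C[OF reach_frame[OF sub_sound_inp_to_outp[OF wM sM], of "lift r + B"]]
    by (auto simp: reach_def add.commute)
  ultimately show ?thesis
    using post y unfolding reach_def by (simp add: add.assoc)
qed

lemma reach_N_lift: "reach N x y \<Longrightarrow> reach C (lift x) (lift y)"
  by (rule reach_simulation[OF fire_N_lift])

subsection \<open>Projecting runs of C onto N and M\<close>

definition prN :: "'a multiset \<Rightarrow> 'a multiset" where
  "prN x = filter_mset (\<lambda>q. q \<notin> places M) x"

definition prM :: "'a multiset \<Rightarrow> 'a multiset" where
  "prM x = filter_mset (\<lambda>q. q \<in> places M) x"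

lemma prN_plus: "prN (x + y) = prN x + prN y" and prN_diff: "prN (x - y) = prN x - prN y"
  and prM_plus: "prM (x + y) = prM x + prM y" and prM_diff: "prM (x - y) = prM x - prM y"
  and prN_repeat: "prN (repeat_mset n x) = repeat_mset n (prN x)"
  and prM_repeat: "prM (repeat_mset n x) = repeat_mset n (prM x)"
  and prN_prM: "prN x + prM x = x"
  and prN_empty: "prN {#} = {#}" and prM_empty: "prM {#} = {#}"
  unfolding prN_def prM_def by (auto simp: multiset_eq_iff)

lemma pr_places_N:
  assumes "S \<subseteq> places N"
  shows "prN (mset_set S) = mset_set S" and "prM (mset_set S) = {#}"
  using assms disPP unfolding prN_def prM_def
  by (auto simp: filter_mset_eq_conv dest!: in_mset_setD)

lemma pr_places_M:
  assumes "S \<subseteq> places M"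
  shows "prN (mset_set S) = {#}" and "prM (mset_set S) = mset_set S"
  using assms unfolding prN_def prM_def by (auto simp: filter_mset_eq_conv dest!: in_mset_setD)

lemma pr_subst_p:
  assumes "S \<subseteq> places N" and "S' \<subseteq> places M"
  shows "prN (mset_set (subst_p S S')) = mset_set (S - {p})"
    and "prM (mset_set (subst_p S S')) = (if p \<in> S then mset_set S' else {#})"
  using pr_places_N[of "S - {p}"] pr_places_M[OF assms(2)] assms(1)
  unfolding mset_subst_p[OF assms] by (auto simp: prN_plus prM_plus prN_empty prM_empty)

text \<open>A marking m of C is decomposed (relative to k initial tokens) if for
  some numbers l \<le> j of started and finished instances of M, the N-part of m
  together with j - l tokens on p is reachable in N from k.I_N, and the
  M-part together with l.O_M is reachable in M from j.I_M.\<close>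

definition decomposed :: "nat \<Rightarrow> 'a multiset \<Rightarrow> bool" where
  "decomposed k m \<longleftrightarrow> (\<exists>j l. l \<le> j
     \<and> reach N (repeat_mset k (mset_set (inp N))) (prN m + replicate_mset (j - l) p)
     \<and> reach M (repeat_mset j (mset_set (inp M))) (prM m + repeat_mset l (mset_set (outp M))))"

lemma decomposed_init: "decomposed k (repeat_mset k (mset_set (inp C)))"
proof -
  define j where "j = (if p \<in> inp N then k else 0)"
  have fin: "finite (inp N)" using iN finPN by (rule finite_subset)
  have "repeat_mset k (mset_set (inp N))
      = prN (repeat_mset k (mset_set (inp C))) + replicate_mset (j - 0) p"
    using pr_subst_p[OF iN iM] unfolding inpC prN_repeat j_def
    by (subst mset_set_split_p[OF fin]) auto
  moreover have "repeat_mset j (mset_set (inp M))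
      = prM (repeat_mset k (mset_set (inp C))) + repeat_mset 0 (mset_set (outp M))"
    using pr_subst_p[OF iN iM] unfolding inpC prM_repeat j_def by auto
  ultimately show ?thesis unfolding decomposed_def reach_def by (metis rtranclp.rtrancl_refl le0)
qed

text \<open>Firing a transition of M in C only moves the M-part.\<close>

lemma decomposed_fire_M:
  assumes dec: "decomposed k m" and t: "t \<in> trans M" and en: "mset_set (preset C t) \<subseteq># m"
  shows "decomposed k (m - mset_set (preset C t) + mset_set (postset C t))" (is "decomposed k ?m'")
proof -
  obtain j l where lj: "l \<le> j"
    and rN: "reach N (repeat_mset k (mset_set (inp N))) (prN m + replicate_mset (j - l) p)"
    and rM: "reach M (repeat_mset j (mset_set (inp M))) (prM m + repeat_mset l (mset_set (outp M)))"
    using dec unfolding decomposed_def by blast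
  note pre = pr_places_M[OF preM_sub[OF t]] and post = pr_places_M[OF postM_sub[OF t]]
  have N_part: "prN ?m' = prN m"
    unfolding presetC_M[OF t] postsetC_M[OF t] by (simp add: prN_plus prN_diff pre post)
  have M_part: "prM ?m' = prM m - mset_set (preset M t) + mset_set (postset M t)"
    unfolding presetC_M[OF t] postsetC_M[OF t] by (simp add: prM_plus prM_diff pre post)
  have "mset_set (preset M t) \<subseteq># prM m"
    using multiset_filter_mono[OF en, of "\<lambda>q. q \<in> places M"] pre
    unfolding presetC_M[OF t] prM_def by simp
  then have "fire M (prM m) (prM ?m')" unfolding fire_def M_part using t by blast
  then have "fire M (prM m + repeat_mset l (mset_set (outp M))) (prM ?m' + repeat_mset l (mset_set (outp M)))"
    by (rule fire_frame)
  then have "reach M (repeat_mset j (mset_set (inp M))) (prM ?m' + repeat_mset l (mset_set (outp M)))"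
    using rM unfolding reach_def by simp
  then show ?thesis using rN lj N_part unfolding decomposed_def by metis
qed

lemma shift_tokens: "B \<subseteq># x \<Longrightarrow> x + A = (x - B) + (A + B)"
  by (metis add.assoc add.commute subset_mset.diff_add)

text \<open>Firing a transition t of N in C: t consumes one output copy of M
  (finishing an instance of M, which is possible only if M has produced one)
  instead of a token on p, and starts a new instance of M instead of putting
  a token on p.\<close>

lemma decomposed_fire_N:
  assumes dec: "decomposed k m" and t: "t \<in> trans N" and en: "mset_set (preset C t) \<subseteq># m"
  shows "decomposed k (m - mset_set (preset C t) + mset_set (postset C t))" (is "decomposed k ?m'")
proof -
  obtain j l where
        rN: "reach N (repeat_mset k (mset_set (inp N))) (prN m + replicate_mset (j - l) p)"
    and rM: "reach M (repeat_mset j (mset_set (inp M))) (prM m + repeat_mset l (mset_set (outp M)))"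
    using dec unfolding decomposed_def by blast
  define A where "A = mset_set (preset N t - {p})"
  define B where "B = mset_set (postset N t - {p})"
  define a :: nat where "a = (if p \<in> preset N t then 1 else 0)"
  define b :: nat where "b = (if p \<in> postset N t then 1 else 0)"
  define Oa where "Oa = repeat_mset a (mset_set (outp M))"
  define Ib where "Ib = repeat_mset b (mset_set (inp M))"
  have finPre: "finite (preset N t)" and finPost: "finite (postset N t)"
    using preN_sub[OF t] postN_sub[OF t] finPN by (auto intro: finite_subset)
  have preC: "mset_set (preset C t) = A + Oa"
    using mset_subst_p[OF preN_sub[OF t] oM] unfolding presetC_N[OF t] A_def Oa_def a_def by simp
  have postC: "mset_set (postset C t) = B + Ib"
    using mset_subst_p[OF postN_sub[OF t] iM] unfolding postsetC_N[OF t] B_def Ib_def b_def by simp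
  have preN: "mset_set (preset N t) = A + replicate_mset a p"
    using mset_set_split_p[OF finPre] unfolding A_def a_def by simp
  have postN: "mset_set (postset N t) = B + replicate_mset b p"
    using mset_set_split_p[OF finPost] unfolding B_def b_def by simp
  have A: "prN A = A" "prM A = {#}" and B: "prN B = B" "prM B = {#}"
    using pr_places_N[of "preset N t - {p}"] pr_places_N[of "postset N t - {p}"]
      preN_sub[OF t] postN_sub[OF t] unfolding A_def B_def by auto
  have Oa: "prN Oa = {#}" "prM Oa = Oa" and Ib: "prN Ib = {#}" "prM Ib = Ib"
    using pr_places_M[OF oM] pr_places_M[OF iM] unfolding Oa_def Ib_def
    by (simp_all add: prN_repeat prM_repeat)
  have no_p: "count A p = 0" "count B p = 0"
    unfolding A_def B_def by (auto simp: count_eq_zero_iff dest: in_mset_setD)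
  have A_le: "A \<subseteq># prN m"
    using multiset_filter_mono[OF en, of "\<lambda>q. q \<notin> places M"] A Oa
    unfolding preC prN_def by simp
  have Oa_le: "Oa \<subseteq># prM m"
    using multiset_filter_mono[OF en, of "\<lambda>q. q \<in> places M"] A Oa
    unfolding preC prM_def by simp
  have N_part: "prN ?m' = prN m - A + B"
    unfolding preC postC by (simp add: prN_plus prN_diff A B Oa Ib)
  have M_part: "prM ?m' = prM m - Oa + Ib"
    unfolding preC postC by (simp add: prM_plus prM_diff A B Oa Ib)
  have shift: "prM m + repeat_mset l (mset_set (outp M))
      = (prM m - Oa) + repeat_mset (l + a) (mset_set (outp M))"
    using shift_tokens[OF Oa_le] unfolding Oa_def by (simp add: repeat_mset_distrib)
  have "marking M (prM m - Oa)" unfolding marking_def prM_def by (auto dest: in_diffD)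
  then have la: "l + a \<le> j"
    using sub_sound_output_bound[OF wM sM] rM unfolding shift by blast
  have "fire N (prN m + replicate_mset (j - l) p) (prN ?m' + replicate_mset (j + b - (l + a)) p)"
    unfolding fire_def
  proof (intro bexI[of _ t] conjI)
    show "mset_set (preset N t) \<subseteq># prN m + replicate_mset (j - l) p"
      unfolding preN using A_le la no_p by (auto simp: subseteq_mset_def)
    show "prN ?m' + replicate_mset (j + b - (l + a)) p =
      prN m + replicate_mset (j - l) p - mset_set (preset N t) + mset_set (postset N t)"
      unfolding preN postN N_part using A_le la no_p by (auto simp: multiset_eq_iff subseteq_mset_def)
  qed (rule t)
  then have "reach N (repeat_mset k (mset_set (inp N))) (prN ?m' + replicate_mset (j + b - (l + a)) p)"
    using rN unfolding reach_def by simp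
  moreover have "reach M (repeat_mset (j + b) (mset_set (inp M)))
      (prM ?m' + repeat_mset (l + a) (mset_set (outp M)))"
    using reach_frame[OF rM, of Ib] unfolding shift M_part Ib_def
    by (simp add: repeat_mset_distrib ac_simps)
  moreover have "l + a \<le> j + b" using la by simp
  ultimately show ?thesis unfolding decomposed_def by blast
qed

lemma decomposed_reach:
  assumes "reach C (repeat_mset k (mset_set (inp C))) m"
  shows "decomposed k m"
  using assms unfolding reach_def[of C]
proof (induction rule: rtranclp_induct)
  case base
  show ?case by (rule decomposed_init)
next
  case (step y z)
  from step(2) obtain t where t: "t \<in> trans C" "mset_set (preset C t) \<subseteq># y"
    "z = y - mset_set (preset C t) + mset_set (postset C t)"
    unfolding fire_def by blast
  then consider "t \<in> trans N" | "t \<in> trans M" using transC by auto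
  then show ?case
    using decomposed_fire_N[OF step(3) _ t(2)] decomposed_fire_M[OF step(3) _ t(2)] t(3)
    by cases simp_all
qed

text \<open>Runs of M on the M-part and of N on the N-part (with c extra tokens on
  p standing for c finished instances of M) combine to a run of C.\<close>

lemma glue_runs:
  assumes m: "marking C m"
    and rM: "reach M (prM m) (repeat_mset c (mset_set (outp M)))"
    and rN: "reach N (prN m + replicate_mset c p) (repeat_mset n (mset_set (outp N)))"
  shows "reach C m (repeat_mset n (mset_set (outp C)))"
proof -
  have "p \<notin># prN m" using m unfolding marking_def prN_def place_subst_def by auto
  then have "lift (prN m + replicate_mset c p) = prN m + repeat_mset c (mset_set (outp M))"
    by (simp add: lift_plus lift_no_p lift_p)
  moreover have "lift (repeat_mset n (mset_set (outp N))) = repeat_mset n (mset_set (outp C))"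
    unfolding lift_repeat lift_mset_set[OF oN] outpC ..
  moreover have "reach C m (prN m + repeat_mset c (mset_set (outp M)))"
    using reach_M_in_C[OF reach_frame[OF rM, of "prN m"]] by (metis prN_prM add.commute)
  ultimately show ?thesis using reach_N_lift[OF rN] by (metis reach_trans)
qed

lemma sub_sound_place_subst:
  assumes sN: "sub_sound N"
  shows "sub_sound C"
  unfolding sub_sound_def
proof (intro allI impI, elim conjE)
  fix k k' :: nat and m
  assume kk: "k' \<le> k" and m: "marking C m"
    and r: "reach C (repeat_mset k (mset_set (inp C))) (m + repeat_mset k' (mset_set (outp C)))"
  obtain j l where
        rN: "reach N (repeat_mset k (mset_set (inp N)))
               (prN (m + repeat_mset k' (mset_set (outp C))) + replicate_mset (j - l) p)"
    and rM: "reach M (repeat_mset j (mset_set (inp M)))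
               (prM (m + repeat_mset k' (mset_set (outp C))) + repeat_mset l (mset_set (outp M)))"
    using decomposed_reach[OF r] unfolding decomposed_def by blast
  (* e counts the finished instances of M that appear as outputs of C *)
  define e where "e = (if p \<in> outp N then k' else 0)"
  define c where "c = j - (l + e)"
  have "marking M (prM m)" unfolding marking_def prM_def by auto
  moreover have rM': "reach M (repeat_mset j (mset_set (inp M)))
      (prM m + repeat_mset (l + e) (mset_set (outp M)))"
    using rM pr_subst_p(2)[OF oN oM]
    unfolding outpC prM_plus prM_repeat e_def
    by (cases "p \<in> outp N") (simp_all add: repeat_mset_distrib ac_simps)
  ultimately have le: "l + e \<le> j" using sub_sound_output_bound[OF wM sM] by blast
  then have "reach M (prM m) (repeat_mset c (mset_set (outp M)))"
    using sM \<open>marking M (prM m)\<close> rM' unfolding sub_sound_def c_def by blast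
  moreover have "reach N (prN m + replicate_mset c p) (repeat_mset (k - k') (mset_set (outp N)))"
  proof -
    have fin: "finite (outp N)" using oN finPN by (rule finite_subset)
    have "prN (m + repeat_mset k' (mset_set (outp C))) + replicate_mset (j - l) p
        = (prN m + replicate_mset c p) + repeat_mset k' (mset_set (outp N))"
      using le unfolding outpC prN_plus prN_repeat pr_subst_p(1)[OF oN oM] c_def e_def
      by (subst mset_set_split_p[OF fin]) (auto simp: multiset_eq_iff)
    moreover have "marking N (prN m + replicate_mset c p)"
      using m pP unfolding marking_def prN_def place_subst_def by auto
    ultimately show ?thesis using sN rN kk unfolding sub_sound_def by metis
  qed
  ultimately show "reach C m (repeat_mset (k - k') (mset_set (outp C)))"
    by (rule glue_runs[OF m])
qed

end

theorem mainTheorem8: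
  fixes N M :: "'a pnet" and p :: 'a
  assumes "pWF_net N" and "pWF_net M"
    and "nodes N \<inter> nodes M = {}"
    and "sub_sound N" and "sub_sound M"
    and "p \<in> places N"
  shows "sub_sound (place_subst N p M)"
proof -
  interpret place_substitution N M p
    using assms by unfold_locales
  show ?thesis using assms(4) by (rule sub_sound_place_subst)
qed

end
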